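(* Let $g_{ij}(x^k)$ be a (non-degenerate) metric on an $n$-dimensional manifold with coordinates $x^k$, and let $V_0(t,x^k)$, $V_1(t,x^k)$ be smooth functions. Consider the perturbed Lagrangian \[ L\left(t,x^{k},\dot{x}^{k},\varepsilon\right)=\frac{1}{2}g_{ij}\dot{x}^{i}\dot{x}^{j}-V_{0}(t,x^{k})-\varepsilon V_{1}(t,x^{k})+O(\varepsilon^{2}). \] Then every first-order approximate Noether point symmetry $X=X_0+\varepsilon X_1$, $X_A=\xi_A(t,x^k)\partial_t+\eta_A^i(t,x^k)\partial_i$ ($A=0,1$), of $L$ is generated from the homothetic algebra of $g_{ij}$: $\xi_0=\xi_0(t)$, $\xi_1=\xi_1(t)$, and the spatial parts $\eta_A^i(t,\cdot)$ (for each fixed $t$) are homothetic (or Killing) vector fields of $g_{ij}$, i.e. $\mathcal{L}_{\eta_A}g_{ij}=\xi_{A,t}\,g_{ij}$ for $A=0,1$.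
   Context: Dot denotes total derivative with respect to $t$; $\partial_i=\partial/\partial x^i$; $\mathcal{L}_{\eta}$ denotes the Lie derivative along $\eta$. A vector field $Y$ is a homothetic vector field (HV) of $g_{ij}$ if $\mathcal{L}_Y g_{ij}=2\psi g_{ij}$ with $\psi$ constant (a Killing vector if $\psi=0$). A first-order approximate Noether point symmetry of $L=L_0+\varepsilon L_1$ (here $L_0=\frac12 g_{ij}\dot x^i\dot x^j-V_0$, $L_1=-V_1$) with generator $X=X_0+\varepsilon X_1$ is one for which there exist functions $f_A(t,x^k)$, $A=0,1$, such that \[ \left(X_0^{[1]}+\varepsilon X_1^{[1]}\right)(L_0+\varepsilon L_1)+(L_0+\varepsilon L_1)\frac{d}{dt}(\xi_0+\varepsilon\xi_1)-\frac{d}{dt}(f_0+\varepsilon f_1)=O(\varepsilon^2), \] where $X_A^{[1]}=\xi_A\partial_t+\eta_A^i\partial_i+(\dot\eta_A^i-\dot x^i\dot\xi_A)\partial_{\dot x^i}$ is the first prolongation and the condition is imposed identically in $t,x^k,\dot x^k$ at orders $\varepsilon^0$ and $\varepsilon^1$. *)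

theory Defs
  imports "HOL-Analysis.Analysis" "HOL-Library.Landau_Symbols"
begin

text \<open>Points of the base space are pairs (t, x) with x in R^n (coordinates x^k,
  index type 'n of class finite); points of the first jet space are triples (t, x, xdot).\<close>

fun iter_dderiv :: "'a::real_normed_vector list \<Rightarrow> ('a \<Rightarrow> 'b::real_normed_vector) \<Rightarrow> 'a \<Rightarrow> 'b" where
  "iter_dderiv [] f = f"
| "iter_dderiv (u # us) f = (\<lambda>p. frechet_derivative (iter_dderiv us f) (at p) u)"

definition smooth :: "('a::real_normed_vector \<Rightarrow> 'b::real_normed_vector) \<Rightarrow> bool" where
  "smooth f \<longleftrightarrow> (\<forall>us p. iter_dderiv us f differentiable (at p))"

text \<open>Total derivative d/dt of a function h(t,x) along the jet (t,x,xdot):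
  h_t + xdot^k \<partial>_k h.\<close>
definition tot_deriv :: "(real \<times> (real^'n) \<Rightarrow> 'b::real_normed_vector) \<Rightarrow> real \<Rightarrow> real^'n \<Rightarrow> real^'n \<Rightarrow> 'b" where
  "tot_deriv h t x v = frechet_derivative h (at (t, x)) (1, v)"

text \<open>First prolongation of X = xi \<partial>_t + eta^i \<partial>_i applied to a function F(t,x,xdot):
  xi F_t + eta^i F_{x^i} + (d eta^i/dt - xdot^i d xi/dt) F_{xdot^i}.\<close>
definition prolong :: "(real \<times> (real^'n) \<Rightarrow> real) \<Rightarrow> (real \<times> (real^'n) \<Rightarrow> real^'n)
    \<Rightarrow> (real \<times> (real^'n) \<times> (real^'n) \<Rightarrow> real) \<Rightarrow> real \<times> (real^'n) \<times> (real^'n) \<Rightarrow> real" where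
  "prolong xi eta F = (\<lambda>(t, x, v). frechet_derivative F (at (t, x, v))
      (xi (t, x), eta (t, x), tot_deriv eta t x v - tot_deriv xi t x v *\<^sub>R v))"

definition lag0 :: "(real^'n \<Rightarrow> real^'n^'n) \<Rightarrow> (real \<times> (real^'n) \<Rightarrow> real) \<Rightarrow> real \<times> (real^'n) \<times> (real^'n) \<Rightarrow> real" where
  "lag0 g V0 = (\<lambda>(t, x, v). (1/2) * (\<Sum>i\<in>UNIV. \<Sum>j\<in>UNIV. g x $ i $ j * v $ i * v $ j) - V0 (t, x))"

definition lag1 :: "(real \<times> (real^'n) \<Rightarrow> real) \<Rightarrow> real \<times> (real^'n) \<times> (real^'n) \<Rightarrow> real" where
  "lag1 V1 = (\<lambda>(t, x, v). - V1 (t, x))"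

definition approx_noether_symmetry ::
  "(real^'n \<Rightarrow> real^'n^'n) \<Rightarrow> (real \<times> (real^'n) \<Rightarrow> real) \<Rightarrow> (real \<times> (real^'n) \<Rightarrow> real)
   \<Rightarrow> (real \<times> (real^'n) \<Rightarrow> real) \<Rightarrow> (real \<times> (real^'n) \<Rightarrow> real^'n)
   \<Rightarrow> (real \<times> (real^'n) \<Rightarrow> real) \<Rightarrow> (real \<times> (real^'n) \<Rightarrow> real^'n) \<Rightarrow> bool" where
  "approx_noether_symmetry g V0 V1 xi0 eta0 xi1 eta1 \<longleftrightarrow>
     smooth xi0 \<and> smooth eta0 \<and> smooth xi1 \<and> smooth eta1 \<and>
     (\<exists>f0 f1 :: real \<times> (real^'n) \<Rightarrow> real. smooth f0 \<and> smooth f1 \<and>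
       (\<forall>t x v.
          (\<lambda>\<epsilon>::real.
              let L = (\<lambda>q. lag0 g V0 q + \<epsilon> * lag1 V1 q) in
              prolong xi0 eta0 L (t, x, v) + \<epsilon> * prolong xi1 eta1 L (t, x, v)
              + L (t, x, v) * tot_deriv (\<lambda>p. xi0 p + \<epsilon> * xi1 p) t x v
              - tot_deriv (\<lambda>p. f0 p + \<epsilon> * f1 p) t x v)
          \<in> O[at 0](\<lambda>\<epsilon>. \<epsilon> ^ 2)))"

definition lie_metric :: "(real^'n \<Rightarrow> real^'n) \<Rightarrow> (real^'n \<Rightarrow> real^'n^'n) \<Rightarrow> real^'n \<Rightarrow> real^'n^'n" where
  "lie_metric Y g x = (\<chi> i j.
      (\<Sum>k\<in>UNIV. Y x $ k * frechet_derivative g (at x) (axis k 1) $ i $ j)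
    + (\<Sum>k\<in>UNIV. g x $ k $ j * frechet_derivative Y (at x) (axis i 1) $ k)
    + (\<Sum>k\<in>UNIV. g x $ i $ k * frechet_derivative Y (at x) (axis j 1) $ k))"

definition homothetic :: "(real^'n \<Rightarrow> real^'n) \<Rightarrow> (real^'n \<Rightarrow> real^'n^'n) \<Rightarrow> real \<Rightarrow> bool" where
  "homothetic Y g psi \<longleftrightarrow> (\<forall>x. lie_metric Y g x = (2 * psi) *\<^sub>R g x)"

end

theory Submission
  imports Defs
begin

text \<open>Collecting powers of \<epsilon>, the Noether condition at orders \<epsilon>^0 and \<epsilon>^1 says that the terms
  K_A(v) coming from the kinetic energy g(v, v)/2 equal an expression that is affine in the
  velocity v, because the potentials and the gauge functions f_A only enter through total
  derivatives. Replacing v by s v turns K_A into a cubic polynomial in s. Its cubic coefficient is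
  (\<partial>_x \<xi>_A \<cdot> v) g(v, v), which forces \<partial>_x \<xi>_A = 0 because g is non-degenerate; its quadratic
  coefficient is (L_\<eta>_A g - \<xi>_A,t g)(v, v), and a symmetric matrix with vanishing quadratic form
  is zero.\<close>

lemma smooth_differentiable: "smooth f \<Longrightarrow> f differentiable (at p)"
  unfolding smooth_def by (metis iter_dderiv.simps(1))

lemma has_derivative_vec_nth:
  "(f has_derivative f') F \<Longrightarrow> ((\<lambda>x. f x $ i) has_derivative (\<lambda>h. f' h $ i)) F"
  using bounded_linear.has_derivative[OF bounded_linear_vec_nth] by blast

lemma has_derivative_compose_differentiable:
  assumes "(u has_derivative u') (at p)" and "u p = y" and "f differentiable at y"
  shows "((\<lambda>q. f (u q)) has_derivative (\<lambda>h. frechet_derivative f (at y) (u' h))) (at p)"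
  using has_derivative_compose[OF assms(1)] assms(2,3) frechet_derivative_works by blast

lemma has_derivative_space_slice:
  "f differentiable at (t, y) \<Longrightarrow>
    ((\<lambda>z. f (t, z)) has_derivative (\<lambda>w. frechet_derivative f (at (t, y)) (0, w))) (at y)"
  by (rule has_derivative_compose_differentiable[where u = "\<lambda>z. (t, z)"])
    (auto intro!: derivative_eq_intros)

lemma has_derivative_time_slice:
  "f differentiable at (t, y) \<Longrightarrow>
    ((\<lambda>s. f (s, y)) has_derivative (\<lambda>h. frechet_derivative f (at (t, y)) (h, 0))) (at t)"
  by (rule has_derivative_compose_differentiable[where u = "\<lambda>s. (s, y)"])
    (auto intro!: derivative_eq_intros)

lemma tot_deriv_add:
  assumes "f differentiable at (t, x)" and "h differentiable at (t, x)"
  shows "tot_deriv (\<lambda>p. f p + h p) t x v = tot_deriv f t x v + tot_deriv h t x v"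
proof -
  have "((\<lambda>p. f p + h p) has_derivative
      (\<lambda>d. frechet_derivative f (at (t, x)) d + frechet_derivative h (at (t, x)) d)) (at (t, x))"
    using assms by (intro has_derivative_add) (simp_all add: frechet_derivative_works[symmetric])
  then show ?thesis
    unfolding tot_deriv_def by (simp add: frechet_derivative_at[symmetric])
qed

lemma tot_deriv_cmult:
  fixes f :: "real \<times> (real^'n) \<Rightarrow> real"
  assumes "f differentiable at (t, x)"
  shows "tot_deriv (\<lambda>p. c * f p) t x v = c * tot_deriv f t x v"
proof -
  have "((\<lambda>p. c * f p) has_derivative (\<lambda>d. c * frechet_derivative f (at (t, x)) d)) (at (t, x))"
    using assms by (intro has_derivative_mult_right) (simp add: frechet_derivative_works[symmetric])
  then show ?thesis
    unfolding tot_deriv_def by (simp add: frechet_derivative_at[symmetric])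
qed

lemma tot_deriv_scaleR_velocity:
  assumes "f differentiable at (t, x)"
  shows "tot_deriv f t x (s *\<^sub>R v) =
    frechet_derivative f (at (t, x)) (1, 0) + s *\<^sub>R frechet_derivative f (at (t, x)) (0, v)"
proof -
  note lin = linear_frechet_derivative[OF assms]
  have "(1::real, s *\<^sub>R v) = (1, 0) + s *\<^sub>R (0, v)" by simp
  then show ?thesis
    unfolding tot_deriv_def by (simp only: linear_add[OF lin] linear_scale[OF lin])
qed

definition matrix_form :: "real^'n^'n \<Rightarrow> real^'n \<Rightarrow> real^'n \<Rightarrow> real" where
  "matrix_form M u w = (\<Sum>i\<in>UNIV. \<Sum>j\<in>UNIV. M $ i $ j * u $ i * w $ j)"

lemma matrix_form_bilinear_simps:
  "matrix_form M (u1 + u2) w = matrix_form M u1 w + matrix_form M u2 w"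
  "matrix_form M u (w1 + w2) = matrix_form M u w1 + matrix_form M u w2"
  "matrix_form M (u1 - u2) w = matrix_form M u1 w - matrix_form M u2 w"
  "matrix_form M u (w1 - w2) = matrix_form M u w1 - matrix_form M u w2"
  "matrix_form M (c *\<^sub>R u) w = c * matrix_form M u w"
  "matrix_form M u (c *\<^sub>R w) = c * matrix_form M u w"
  "matrix_form (M1 - c *\<^sub>R M2) u w = matrix_form M1 u w - c * matrix_form M2 u w"
  unfolding matrix_form_def
  by (simp_all add: algebra_simps sum.distrib sum_subtractf sum_distrib_left)

lemma matrix_form_axis: "matrix_form M (axis i 1) (axis j 1) = M $ i $ j"
proof -
  have "matrix_form M (axis i 1) (axis j 1) =
      (\<Sum>a\<in>UNIV. \<Sum>b\<in>UNIV. if a = i then if b = j then M $ a $ b else 0 else 0)"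
    unfolding matrix_form_def by (intro sum.cong refl) (simp add: axis_def)
  also have "\<dots> = (\<Sum>a\<in>UNIV. if a = i then M $ a $ j else 0)"
    by (intro sum.cong refl) auto
  also have "\<dots> = M $ i $ j" by simp
  finally show ?thesis .
qed

lemma has_derivative_matrix_form:
  assumes "(M has_derivative M') (at p)" and "(u has_derivative u') (at p)"
    and "(w has_derivative w') (at p)"
  shows "((\<lambda>q. matrix_form (M q) (u q) (w q)) has_derivative
    (\<lambda>h. matrix_form (M' h) (u p) (w p) + matrix_form (M p) (u' h) (w p)
      + matrix_form (M p) (u p) (w' h))) (at p)"
  unfolding matrix_form_def
  by (rule has_derivative_eq_rhs, (rule derivative_intros has_derivative_vec_nth assms)+)
    (simp add: fun_eq_iff algebra_simps sum.distrib)

lemma cubic_eq_0_imp_coeffs_eq_0: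
  fixes c0 c1 c2 c3 :: real
  assumes "\<And>s. c0 + s * c1 + s^2 * c2 + s^3 * c3 = 0"
  shows "c0 = 0 \<and> c1 = 0 \<and> c2 = 0 \<and> c3 = 0"
  using assms[of 0] assms[of 1] assms[of "-1"] assms[of 2]
  by (simp add: power2_eq_square power3_eq_cube; linarith)

lemma symmetric_matrix_eq_0_if_matrix_form_diag_eq_0:
  assumes "transpose M = M" and "\<And>v. matrix_form M v v = 0"
  shows "M = 0"
proof -
  have "M $ i $ j = 0" for i j
  proof -
    have "M $ j $ i = M $ i $ j" using assms(1) by (metis transpose_def vec_lambda_beta)
    moreover have "matrix_form M (axis i 1 + axis j 1) (axis i 1 + axis j 1) = 0" by (rule assms(2))
    moreover have "matrix_form M (axis i 1) (axis i 1) = 0" and "matrix_form M (axis j 1) (axis j 1) = 0"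
      by (rule assms(2))+
    ultimately show ?thesis by (simp add: matrix_form_bilinear_simps matrix_form_axis)
  qed
  then show ?thesis by (simp add: vec_eq_iff)
qed

text \<open>If l w \<noteq> 0, the cubic s \<mapsto> l (u + s w) M(u + s w, u + s w) vanishes identically, and its
  coefficients force M(u, u) = 0 for every u, contradicting det M \<noteq> 0.\<close>
lemma linear_eq_0_if_mult_matrix_form_diag_eq_0:
  assumes "transpose M = M" "det M \<noteq> 0" "linear l" "\<And>v. l v * matrix_form M v v = 0"
  shows "l w = 0"
proof (rule ccontr)
  assume lw: "l w \<noteq> 0"
  have "matrix_form M u u = 0" for u
  proof -
    have "(l u + s * l w)
        * (matrix_form M u u + s * (matrix_form M u w + matrix_form M w u) + s^2 * matrix_form M w w)
      = 0" for s
      using assms(4)[of "u + s *\<^sub>R w"] assms(3)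
      by (simp add: matrix_form_bilinear_simps linear_add linear_scale algebra_simps
          power2_eq_square)
    then have "l u * matrix_form M u u
      + s * (l u * (matrix_form M u w + matrix_form M w u) + l w * matrix_form M u u)
      + s^2 * (l u * matrix_form M w w + l w * (matrix_form M u w + matrix_form M w u))
      + s^3 * (l w * matrix_form M w w) = 0" for s
      by (simp add: algebra_simps power2_eq_square power3_eq_cube)
    from cubic_eq_0_imp_coeffs_eq_0[OF this] lw show ?thesis by auto
  qed
  then have "M = 0" by (rule symmetric_matrix_eq_0_if_matrix_form_diag_eq_0[OF assms(1)])
  then show False using assms(2) by (metis det_0 mat_0)
qed

lemma linear_basis_expansion:
  fixes D :: "real^'n \<Rightarrow> 'b::real_vector"
  assumes "linear D"
  shows "D v = (\<Sum>i\<in>UNIV. v $ i *\<^sub>R D (axis i 1))"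
proof -
  have "D v = D (\<Sum>i\<in>UNIV. v $ i *\<^sub>R axis i 1)"
    using basis_expansion[of v] by (simp add: scalar_mult_eq_scaleR)
  also have "\<dots> = (\<Sum>i\<in>UNIV. v $ i *\<^sub>R D (axis i 1))"
    by (simp add: linear_sum[OF assms] linear_scale[OF assms])
  finally show ?thesis .
qed

lemma matrix_form_linear_left:
  fixes G :: "real^'n^'n" and D :: "real^'n \<Rightarrow> real^'n"
  assumes "linear D"
  shows "matrix_form G (D v) v =
    (\<Sum>i\<in>UNIV. \<Sum>j\<in>UNIV. (\<Sum>k\<in>UNIV. G$k$j * D (axis i 1) $ k) * v$i * v$j)"
proof -
  have "matrix_form G (D v) v = (\<Sum>k\<in>UNIV. \<Sum>j\<in>UNIV. \<Sum>i\<in>UNIV. G$k$j * D (axis i 1) $ k * v$i * v$j)"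
    by (subst linear_basis_expansion[OF assms])
      (simp add: matrix_form_def sum_distrib_left sum_distrib_right mult_ac)
  also have "\<dots> = (\<Sum>j\<in>UNIV. \<Sum>i\<in>UNIV. \<Sum>k\<in>UNIV. G$k$j * D (axis i 1) $ k * v$i * v$j)"
    by (subst sum.swap) (rule sum.cong[OF refl], rule sum.swap)
  also have "\<dots> = (\<Sum>i\<in>UNIV. \<Sum>j\<in>UNIV. \<Sum>k\<in>UNIV. G$k$j * D (axis i 1) $ k * v$i * v$j)"
    by (rule sum.swap)
  finally show ?thesis by (simp add: sum_distrib_right)
qed

lemma matrix_form_linear_right:
  fixes G :: "real^'n^'n" and D :: "real^'n \<Rightarrow> real^'n"
  assumes "linear D"
  shows "matrix_form G v (D v) =
    (\<Sum>i\<in>UNIV. \<Sum>j\<in>UNIV. (\<Sum>k\<in>UNIV. G$i$k * D (axis j 1) $ k) * v$i * v$j)"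
proof -
  have "matrix_form G v (D v) = (\<Sum>i\<in>UNIV. \<Sum>k\<in>UNIV. \<Sum>j\<in>UNIV. G$i$k * D (axis j 1) $ k * v$i * v$j)"
    by (subst linear_basis_expansion[OF assms])
      (simp add: matrix_form_def sum_distrib_left sum_distrib_right mult_ac)
  also have "\<dots> = (\<Sum>i\<in>UNIV. \<Sum>j\<in>UNIV. \<Sum>k\<in>UNIV. G$i$k * D (axis j 1) $ k * v$i * v$j)"
    by (rule sum.cong[OF refl], rule sum.swap)
  finally show ?thesis by (simp add: sum_distrib_right)
qed

lemma matrix_form_lie_metric:
  fixes g :: "real^'n \<Rightarrow> real^'n^'n" and Y :: "real^'n \<Rightarrow> real^'n"
  assumes "linear (frechet_derivative g (at x))" "linear (frechet_derivative Y (at x))"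
  shows "matrix_form (lie_metric Y g x) v v = matrix_form (frechet_derivative g (at x) (Y x)) v v
     + matrix_form (g x) (frechet_derivative Y (at x) v) v
     + matrix_form (g x) v (frechet_derivative Y (at x) v)"
proof -
  have "frechet_derivative g (at x) (Y x) $ i $ j =
      (\<Sum>k\<in>UNIV. Y x $ k * frechet_derivative g (at x) (axis k 1) $ i $ j)" for i j
    by (subst linear_basis_expansion[OF assms(1)]) simp
  then show ?thesis
    unfolding matrix_form_linear_left[OF assms(2)] matrix_form_linear_right[OF assms(2)]
    by (simp add: matrix_form_def lie_metric_def sum.distrib algebra_simps)
qed

lemma transpose_lie_metric:
  fixes g :: "real^'n \<Rightarrow> real^'n^'n"
  assumes "g differentiable at x" and "\<forall>y. transpose (g y) = g y"
  shows "transpose (lie_metric Y g x) = lie_metric Y g x"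
proof -
  have g_sym: "g y $ i $ j = g y $ j $ i" for y i j
    using assms(2) by (metis transpose_def vec_lambda_beta)
  have "frechet_derivative g (at x) h $ i $ j = frechet_derivative g (at x) h $ j $ i" for h i j
  proof -
    have "((\<lambda>y. g y $ i $ j) has_derivative (\<lambda>h. frechet_derivative g (at x) h $ i $ j)) (at x)"
      "((\<lambda>y. g y $ j $ i) has_derivative (\<lambda>h. frechet_derivative g (at x) h $ j $ i)) (at x)"
      using assms(1)
      by (auto intro!: has_derivative_vec_nth simp: frechet_derivative_works[symmetric])
    then show ?thesis unfolding g_sym[of _ j i] by (metis has_derivative_unique)
  qed
  then show ?thesis
    unfolding transpose_def lie_metric_def by (simp add: vec_eq_iff g_sym)
qed

lemma homothetic_if_matrix_form_lie_metric:
  fixes g :: "real^'n \<Rightarrow> real^'n^'n" and Y :: "real^'n \<Rightarrow> real^'n"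
  assumes "\<And>x. g differentiable at x" "\<And>x. Y differentiable at x" "\<forall>x. transpose (g x) = g x"
    and "\<And>x v. matrix_form (lie_metric Y g x) v v = c * matrix_form (g x) v v"
  shows "homothetic Y g (c / 2)"
  unfolding homothetic_def
proof
  fix x
  have "transpose (lie_metric Y g x - c *\<^sub>R g x) = lie_metric Y g x - c *\<^sub>R g x"
    using transpose_lie_metric[OF assms(1,3)] assms(3) by (simp add: transpose_def vec_eq_iff)
  moreover have "matrix_form (lie_metric Y g x - c *\<^sub>R g x) v v = 0" for v
    using assms(4) by (simp add: matrix_form_bilinear_simps)
  ultimately have "lie_metric Y g x - c *\<^sub>R g x = 0"
    by (rule symmetric_matrix_eq_0_if_matrix_form_diag_eq_0)
  then show "lie_metric Y g x = (2 * (c / 2)) *\<^sub>R g x" by simp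
qed

lemma bigo_square_imp_low_coeffs_eq_0:
  fixes a b c :: real
  assumes "(\<lambda>e. a + e * b + e^2 * c) \<in> O[at 0](\<lambda>e. e^2)"
  shows "a = 0 \<and> b = 0"
proof -
  from landau_o.bigE[OF assms] obtain C
    where bound: "eventually (\<lambda>e. norm (a + e * b + e^2 * c) \<le> C * norm (e^2)) (at (0::real))"
    by blast
  have "eventually (\<lambda>e. \<bar>a + e * b + e^2 * c\<bar> - C * \<bar>e^2\<bar> \<le> 0) (at (0::real))"
    using bound by eventually_elim simp
  moreover have "((\<lambda>e. \<bar>a + e * b + e^2 * c\<bar> - C * \<bar>e^2\<bar>) \<longlongrightarrow> \<bar>a\<bar>) (at (0::real))"
    by (auto intro!: tendsto_eq_intros)
  ultimately have a0: "a = 0" using tendsto_upperbound by fastforce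
  have "eventually (\<lambda>e. \<bar>b + e * c\<bar> - C * \<bar>e\<bar> \<le> 0) (at (0::real))"
    using bound eventually_neq_at_within[of 0 0 UNIV]
  proof eventually_elim
    case (elim e)
    then have "\<bar>e\<bar> * \<bar>b + e * c\<bar> \<le> \<bar>e\<bar> * (C * \<bar>e\<bar>)"
      using a0 by (simp add: abs_mult[symmetric] algebra_simps power2_eq_square)
    then show ?case using elim by simp
  qed
  moreover have "((\<lambda>e. \<bar>b + e * c\<bar> - C * \<bar>e\<bar>) \<longlongrightarrow> \<bar>b\<bar>) (at (0::real))"
    by (auto intro!: tendsto_eq_intros)
  ultimately have "b = 0" using tendsto_upperbound by fastforce
  with a0 show ?thesis by simp
qed

lemma lagrangian_eq_matrix_form:
  "lag0 g V0 (t, x, v) + e * lag1 V1 (t, x, v) =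
    1/2 * matrix_form (g x) v v - V0 (t, x) - e * V1 (t, x)"
  by (simp add: lag0_def lag1_def matrix_form_def)

lemma frechet_derivative_lagrangian:
  assumes "g differentiable at x" "V0 differentiable at (t, x)" "V1 differentiable at (t, x)"
  shows "frechet_derivative (\<lambda>q. lag0 g V0 q + e * lag1 V1 q) (at (t, x, v)) =
    (\<lambda>(dt, dx, dv).
      1/2 * (matrix_form (frechet_derivative g (at x) dx) v v + matrix_form (g x) dv v
        + matrix_form (g x) v dv)
      - frechet_derivative V0 (at (t, x)) (dt, dx)
      - e * frechet_derivative V1 (at (t, x)) (dt, dx))"
proof -
  have "(\<lambda>q. lag0 g V0 q + e * lag1 V1 q) =
      (\<lambda>q. 1/2 * matrix_form (g (fst (snd q))) (snd (snd q)) (snd (snd q))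
        - V0 (fst q, fst (snd q)) - e * V1 (fst q, fst (snd q)))"
    by (simp add: fun_eq_iff lagrangian_eq_matrix_form)
  moreover
  have "((\<lambda>q. g (fst (snd q))) has_derivative (\<lambda>q. frechet_derivative g (at x) (fst (snd q))))
      (at (t, x, v))"
    by (rule has_derivative_compose_differentiable[where u = "\<lambda>q. fst (snd q)"])
      (auto intro!: derivative_eq_intros assms)
  moreover have "((\<lambda>q. V (fst q, fst (snd q))) has_derivative
      (\<lambda>q. frechet_derivative V (at (t, x)) (fst q, fst (snd q)))) (at (t, x, v))"
    if "V differentiable at (t, x)" for V :: "real \<times> (real^'a) \<Rightarrow> real"
    by (rule has_derivative_compose_differentiable[where u = "\<lambda>q. (fst q, fst (snd q))"])
      (auto intro!: derivative_eq_intros that)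
  ultimately show ?thesis
    using assms
    by (auto intro!: frechet_derivative_at[symmetric] has_derivative_eq_rhs[OF derivative_intros(1)]
          derivative_eq_intros has_derivative_matrix_form simp: split_def)
qed

text \<open>The part of the Noether expression (prolonged generator applied to L, plus L D\<xi>) that comes
  from the kinetic energy g(v, v)/2.\<close>
definition noether_kinetic_term :: "(real^'n \<Rightarrow> real^'n^'n) \<Rightarrow> (real \<times> (real^'n) \<Rightarrow> real)
    \<Rightarrow> (real \<times> (real^'n) \<Rightarrow> real^'n) \<Rightarrow> real \<Rightarrow> real^'n \<Rightarrow> real^'n \<Rightarrow> real" where
  "noether_kinetic_term g xi eta t x v =
    (let w = tot_deriv eta t x v - tot_deriv xi t x v *\<^sub>R v in
     1/2 * (matrix_form (frechet_derivative g (at x) (eta (t, x))) v v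
       + matrix_form (g x) w v + matrix_form (g x) v w)
     + 1/2 * matrix_form (g x) v v * tot_deriv xi t x v)"

lemma noether_condition_expansion:
  assumes "g differentiable at x" "V0 differentiable at (t, x)" "V1 differentiable at (t, x)"
    and "xi0 differentiable at (t, x)" "xi1 differentiable at (t, x)"
    and "f0 differentiable at (t, x)" "f1 differentiable at (t, x)"
  shows "(let L = (\<lambda>q. lag0 g V0 q + e * lag1 V1 q) in
      prolong xi0 eta0 L (t, x, v) + e * prolong xi1 eta1 L (t, x, v)
      + L (t, x, v) * tot_deriv (\<lambda>p. xi0 p + e * xi1 p) t x v
      - tot_deriv (\<lambda>p. f0 p + e * f1 p) t x v)
    = (noether_kinetic_term g xi0 eta0 t x v
         - frechet_derivative V0 (at (t, x)) (xi0 (t, x), eta0 (t, x))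
         - V0 (t, x) * tot_deriv xi0 t x v - tot_deriv f0 t x v)
      + e * (noether_kinetic_term g xi1 eta1 t x v
         - frechet_derivative V0 (at (t, x)) (xi1 (t, x), eta1 (t, x))
         - V0 (t, x) * tot_deriv xi1 t x v
         - frechet_derivative V1 (at (t, x)) (xi0 (t, x), eta0 (t, x))
         - V1 (t, x) * tot_deriv xi0 t x v - tot_deriv f1 t x v)
      + e^2 * (- frechet_derivative V1 (at (t, x)) (xi1 (t, x), eta1 (t, x))
         - V1 (t, x) * tot_deriv xi1 t x v)"
  using assms
  by (simp add: Let_def prolong_def lagrangian_eq_matrix_form frechet_derivative_lagrangian
      tot_deriv_add tot_deriv_cmult noether_kinetic_term_def algebra_simps power2_eq_square)

lemma noether_kinetic_term_scaleR:
  assumes "xi differentiable at (t, x)" "eta differentiable at (t, x)"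
  shows "noether_kinetic_term g xi eta t x (s *\<^sub>R v) =
    s * (1/2 * (matrix_form (g x) (frechet_derivative eta (at (t, x)) (1, 0)) v
      + matrix_form (g x) v (frechet_derivative eta (at (t, x)) (1, 0))))
  + s^2 * (1/2 * (matrix_form (frechet_derivative g (at x) (eta (t, x))) v v
      + matrix_form (g x) (frechet_derivative eta (at (t, x)) (0, v)) v
      + matrix_form (g x) v (frechet_derivative eta (at (t, x)) (0, v))
      - frechet_derivative xi (at (t, x)) (1, 0) * matrix_form (g x) v v))
  + s^3 * (- 1/2 * frechet_derivative xi (at (t, x)) (0, v) * matrix_form (g x) v v)"
  unfolding noether_kinetic_term_def Let_def
    tot_deriv_scaleR_velocity[OF assms(1)] tot_deriv_scaleR_velocity[OF assms(2)]
  by (simp only: scaleR_add_left scaleR_scaleR matrix_form_bilinear_simps real_scaleR_def)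
    (simp add: algebra_simps power2_eq_square power3_eq_cube)

lemma noether_determining_equations:
  assumes "xi differentiable at (t, x)" "eta differentiable at (t, x)" "h differentiable at (t, x)"
    and "\<And>w. noether_kinetic_term g xi eta t x w = c + tot_deriv h t x w"
  shows "frechet_derivative xi (at (t, x)) (0, v) * matrix_form (g x) v v = 0"
    and "matrix_form (frechet_derivative g (at x) (eta (t, x))) v v
      + matrix_form (g x) (frechet_derivative eta (at (t, x)) (0, v)) v
      + matrix_form (g x) v (frechet_derivative eta (at (t, x)) (0, v))
      = frechet_derivative xi (at (t, x)) (1, 0) * matrix_form (g x) v v"
proof -
  have "(- c - frechet_derivative h (at (t, x)) (1, 0))
    + s * (1/2 * (matrix_form (g x) (frechet_derivative eta (at (t, x)) (1, 0)) v
      + matrix_form (g x) v (frechet_derivative eta (at (t, x)) (1, 0)))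
      - frechet_derivative h (at (t, x)) (0, v))
    + s^2 * (1/2 * (matrix_form (frechet_derivative g (at x) (eta (t, x))) v v
      + matrix_form (g x) (frechet_derivative eta (at (t, x)) (0, v)) v
      + matrix_form (g x) v (frechet_derivative eta (at (t, x)) (0, v))
      - frechet_derivative xi (at (t, x)) (1, 0) * matrix_form (g x) v v))
    + s^3 * (- 1/2 * frechet_derivative xi (at (t, x)) (0, v) * matrix_form (g x) v v) = 0" for s
    using assms(4)[of "s *\<^sub>R v"]
    unfolding noether_kinetic_term_scaleR[OF assms(1,2)] tot_deriv_scaleR_velocity[OF assms(3)]
    by (simp add: algebra_simps)
  from cubic_eq_0_imp_coeffs_eq_0[OF this]
  show "frechet_derivative xi (at (t, x)) (0, v) * matrix_form (g x) v v = 0"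
    and "matrix_form (frechet_derivative g (at x) (eta (t, x))) v v
      + matrix_form (g x) (frechet_derivative eta (at (t, x)) (0, v)) v
      + matrix_form (g x) v (frechet_derivative eta (at (t, x)) (0, v))
      = frechet_derivative xi (at (t, x)) (1, 0) * matrix_form (g x) v v"
    by auto
qed

lemma depends_on_time_only_if_space_derivative_eq_0:
  fixes xi :: "real \<times> (real^'n) \<Rightarrow> real"
  assumes "\<And>p. xi differentiable at p" and "\<And>t x w. frechet_derivative xi (at (t, x)) (0, w) = 0"
  shows "xi (t, x) = xi (t, 0)"
    and "deriv (\<lambda>s. xi (s, 0)) t = frechet_derivative xi (at (t, x)) (1, 0)"
proof -
  have const: "xi (s, y) = xi (s, 0)" for s y
  proof -
    have "\<And>z. ((\<lambda>z. xi (s, z)) has_derivative (\<lambda>w. 0)) (at z within UNIV)"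
      using has_derivative_space_slice[OF assms(1)] by (simp add: assms(2))
    then have "\<exists>c. \<forall>z\<in>UNIV. xi (s, z) = c"
      by (intro has_derivative_zero_constant) auto
    then show ?thesis by auto
  qed
  then show "xi (t, x) = xi (t, 0)" .
  have "(\<lambda>h. frechet_derivative xi (at (t, x)) (h, 0)) =
      (\<lambda>h. frechet_derivative xi (at (t, x)) (1, 0) * h)"
  proof
    fix h :: real
    have "frechet_derivative xi (at (t, x)) (h *\<^sub>R (1, 0)) =
        h *\<^sub>R frechet_derivative xi (at (t, x)) (1, 0)"
      by (rule linear_scale[OF linear_frechet_derivative[OF assms(1)]])
    then show "frechet_derivative xi (at (t, x)) (h, 0) =
        frechet_derivative xi (at (t, x)) (1, 0) * h"
      by (simp add: mult.commute)
  qed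
  moreover have "(\<lambda>s. xi (s, x)) = (\<lambda>s. xi (s, 0))"
    using const by blast
  ultimately have "((\<lambda>s. xi (s, 0)) has_derivative
      (\<lambda>h. frechet_derivative xi (at (t, x)) (1, 0) * h)) (at t)"
    using has_derivative_time_slice[OF assms(1), where t = t and y = x] by metis
  then show "deriv (\<lambda>s. xi (s, 0)) t = frechet_derivative xi (at (t, x)) (1, 0)"
    by (intro DERIV_imp_deriv) (simp add: has_field_derivative_def)
qed

lemma homothetic_generator_if_determining:
  fixes g :: "real^'n \<Rightarrow> real^'n^'n" and xi :: "real \<times> (real^'n) \<Rightarrow> real"
    and eta :: "real \<times> (real^'n) \<Rightarrow> real^'n"
  assumes g: "smooth g" "\<forall>x. transpose (g x) = g x" "\<forall>x. det (g x) \<noteq> 0"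
    and "smooth xi" "smooth eta" "\<And>t x. h t x differentiable at (t, x)"
    and "\<And>t x w. noether_kinetic_term g xi eta t x w = c t x + tot_deriv (h t x) t x w"
  shows "\<exists>tau. (\<forall>t x. xi (t, x) = tau t) \<and> (\<forall>t. homothetic (\<lambda>x. eta (t, x)) g (deriv tau t / 2))"
proof -
  have xi: "\<And>p. xi differentiable at p" and eta: "\<And>p. eta differentiable at p"
    using assms(4,5) by (simp_all add: smooth_differentiable)
  note determining = noether_determining_equations[OF xi eta assms(6) assms(7)]
  have "frechet_derivative xi (at (t, x)) (0, w) = 0" for t x w
    using g(2,3) has_derivative_linear[OF has_derivative_space_slice[OF xi]] determining(1)
    by (intro linear_eq_0_if_mult_matrix_form_diag_eq_0[where M = "g x"
          and l = "\<lambda>w. frechet_derivative xi (at (t, x)) (0, w)"]) auto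
  note time_only = depends_on_time_only_if_space_derivative_eq_0[OF xi this]
  have homothetic: "homothetic (\<lambda>x. eta (t, x)) g (deriv (\<lambda>s. xi (s, 0)) t / 2)" for t
  proof (rule homothetic_if_matrix_form_lie_metric)
    fix x v
    have eta_slice:
      "((\<lambda>y. eta (t, y)) has_derivative (\<lambda>w. frechet_derivative eta (at (t, x)) (0, w))) (at x)"
      by (rule has_derivative_space_slice[OF eta])
    note eta_slice_derivative = frechet_derivative_at[OF eta_slice, symmetric]
    have "matrix_form (lie_metric (\<lambda>x. eta (t, x)) g x) v v =
        matrix_form (frechet_derivative g (at x) (eta (t, x))) v v
        + matrix_form (g x) (frechet_derivative eta (at (t, x)) (0, v)) v
        + matrix_form (g x) v (frechet_derivative eta (at (t, x)) (0, v))"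
      using matrix_form_lie_metric[OF linear_frechet_derivative[OF smooth_differentiable[OF g(1)]]
          has_derivative_linear[OF eta_slice, folded eta_slice_derivative]]
      by (simp add: eta_slice_derivative)
    also have "\<dots> = frechet_derivative xi (at (t, x)) (1, 0) * matrix_form (g x) v v"
      by (rule determining(2))
    also have "\<dots> = deriv (\<lambda>s. xi (s, 0)) t * matrix_form (g x) v v"
      by (metis time_only(2))
    finally show "matrix_form (lie_metric (\<lambda>x. eta (t, x)) g x) v v =
        deriv (\<lambda>s. xi (s, 0)) t * matrix_form (g x) v v" .
  next
    show "\<And>x. (\<lambda>x. eta (t, x)) differentiable at x"
      using has_derivative_space_slice[OF eta] by (auto simp: differentiable_def)
  qed (simp_all add: g(1,2) smooth_differentiable)
  show ?thesis
    by (intro exI[of _ "\<lambda>s. xi (s, 0)"] conjI allI time_only(1) homothetic)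
qed

lemma approx_noether_symmetry_imp_kinetic_term_affine:
  fixes g :: "real^'n \<Rightarrow> real^'n^'n" and V0 V1 xi0 xi1 :: "real \<times> (real^'n) \<Rightarrow> real"
    and eta0 eta1 :: "real \<times> (real^'n) \<Rightarrow> real^'n"
  assumes "smooth g" "smooth V0" "smooth V1" "approx_noether_symmetry g V0 V1 xi0 eta0 xi1 eta1"
  shows "\<exists>c0 c1 h0 h1. (\<forall>t x. h0 t x differentiable at (t, x) \<and> h1 t x differentiable at (t, x))
    \<and> (\<forall>t x v. noether_kinetic_term g xi0 eta0 t x v = c0 t x + tot_deriv (h0 t x) t x v)
    \<and> (\<forall>t x v. noether_kinetic_term g xi1 eta1 t x v = c1 t x + tot_deriv (h1 t x) t x v)"
proof -
  from assms(4) obtain f0 f1 :: "real \<times> (real^'n) \<Rightarrow> real" where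
    smooth: "smooth xi0" "smooth xi1" "smooth f0" "smooth f1" and
    noether: "\<And>t x v. (\<lambda>\<epsilon>::real.
              let L = (\<lambda>q. lag0 g V0 q + \<epsilon> * lag1 V1 q) in
              prolong xi0 eta0 L (t, x, v) + \<epsilon> * prolong xi1 eta1 L (t, x, v)
              + L (t, x, v) * tot_deriv (\<lambda>p. xi0 p + \<epsilon> * xi1 p) t x v
              - tot_deriv (\<lambda>p. f0 p + \<epsilon> * f1 p) t x v)
          \<in> O[at 0](\<lambda>\<epsilon>. \<epsilon> ^ 2)"
    unfolding approx_noether_symmetry_def by blast
  note differentiable = assms(1-3)[THEN smooth_differentiable] smooth[THEN smooth_differentiable]
  have orders: "noether_kinetic_term g xi0 eta0 t x v
      - frechet_derivative V0 (at (t, x)) (xi0 (t, x), eta0 (t, x))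
      - V0 (t, x) * tot_deriv xi0 t x v - tot_deriv f0 t x v = 0
    \<and> noether_kinetic_term g xi1 eta1 t x v
      - frechet_derivative V0 (at (t, x)) (xi1 (t, x), eta1 (t, x))
      - V0 (t, x) * tot_deriv xi1 t x v
      - frechet_derivative V1 (at (t, x)) (xi0 (t, x), eta0 (t, x))
      - V1 (t, x) * tot_deriv xi0 t x v - tot_deriv f1 t x v = 0" for t x v
    using noether[of t x v]
    by (intro bigo_square_imp_low_coeffs_eq_0)
      (simp only: noether_condition_expansion[OF differentiable])
  have "noether_kinetic_term g xi0 eta0 t x v =
      frechet_derivative V0 (at (t, x)) (xi0 (t, x), eta0 (t, x))
      + tot_deriv (\<lambda>p. V0 (t, x) * xi0 p + f0 p) t x v"
    and "noether_kinetic_term g xi1 eta1 t x v =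
      frechet_derivative V0 (at (t, x)) (xi1 (t, x), eta1 (t, x))
      + frechet_derivative V1 (at (t, x)) (xi0 (t, x), eta0 (t, x))
      + tot_deriv (\<lambda>p. V0 (t, x) * xi1 p + V1 (t, x) * xi0 p + f1 p) t x v" for t x v
    using orders[of t x v] differentiable by (simp_all add: tot_deriv_add tot_deriv_cmult)
  then show ?thesis
    using differentiable by (intro exI conjI allI) auto
qed

theorem theorem1:
  fixes g :: "real^'n \<Rightarrow> real^'n^'n"
    and V0 V1 :: "real \<times> (real^'n) \<Rightarrow> real"
    and xi0 xi1 :: "real \<times> (real^'n) \<Rightarrow> real"
    and eta0 eta1 :: "real \<times> (real^'n) \<Rightarrow> real^'n"
  assumes "smooth g"
    and "\<forall>x. transpose (g x) = g x"
    and "\<forall>x. det (g x) \<noteq> 0"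
    and "smooth V0" and "smooth V1"
    and "approx_noether_symmetry g V0 V1 xi0 eta0 xi1 eta1"
  shows "\<exists>tau0 tau1 :: real \<Rightarrow> real.
           (\<forall>t x. xi0 (t, x) = tau0 t) \<and> (\<forall>t x. xi1 (t, x) = tau1 t) \<and>
           (\<forall>t. homothetic (\<lambda>x. eta0 (t, x)) g (deriv tau0 t / 2)) \<and>
           (\<forall>t. homothetic (\<lambda>x. eta1 (t, x)) g (deriv tau1 t / 2))"
proof -
  have smooth: "smooth xi0" "smooth eta0" "smooth xi1" "smooth eta1"
    using assms(6) unfolding approx_noether_symmetry_def by blast+
  obtain c0 c1 h0 h1 where h: "\<And>t x. h0 t x differentiable at (t, x)" "\<And>t x. h1 t x differentiable at (t, x)"
    and kinetic: "\<And>t x v. noether_kinetic_term g xi0 eta0 t x v = c0 t x + tot_deriv (h0 t x) t x v"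
      "\<And>t x v. noether_kinetic_term g xi1 eta1 t x v = c1 t x + tot_deriv (h1 t x) t x v"
    using approx_noether_symmetry_imp_kinetic_term_affine[OF assms(1,4,5,6)] by blast
  obtain tau0 where "\<forall>t x. xi0 (t, x) = tau0 t" "\<forall>t. homothetic (\<lambda>x. eta0 (t, x)) g (deriv tau0 t / 2)"
    using homothetic_generator_if_determining[OF assms(1-3) smooth(1,2) h(1) kinetic(1)] by blast
  moreover obtain tau1
    where "\<forall>t x. xi1 (t, x) = tau1 t" "\<forall>t. homothetic (\<lambda>x. eta1 (t, x)) g (deriv tau1 t / 2)"
    using homothetic_generator_if_determining[OF assms(1-3) smooth(3,4) h(2) kinetic(2)] by blast
  ultimately show ?thesis by blast
qed

end
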